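(* Let $k$ be a field, $P_n=k[z_1,\dots,z_n]$, $\sigma$ an automorphism of $P_n$, $a\in P_n$ and $A=P_n(\sigma,a)$. If $\sigma^m$ is conjugate to a triangular automorphism for some $m\geq1$, then $\operatorname{GKdim}(A)=n+1$.
   Context: $P_n(\sigma,a)$ is generated by $P_n$ and indeterminates $x,y$ with $xd=\sigma(d)x$, $yd=\sigma^{-1}(d)y$ ($d\in P_n$), $yx=a$, $xy=\sigma(a)$. Two automorphisms $\sigma,\tau$ are conjugate if $\tau=\eta^{-1}\sigma\eta$ for some automorphism $\eta$. An automorphism $\tau$ of $P_n$ is triangular if $\tau(z_i)=\lambda_iz_i+g_i$ with $\lambda_i\in k^*$, $g_i\in k[z_{i+1},\dots,z_n]$ for $i<n$ and $g_n\in k$. $\operatorname{GKdim}(B)=\sup_V\limsup_{n\to\infty}\log_n\dim_k(\sum_{i=0}^nV^i)$. *)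

theory Defs
  imports Complex_Main "HOL-Library.Poly_Mapping" "HOL-Library.Extended_Real"
    "HOL-Library.Liminf_Limsup"
begin

text \<open>Polynomials over a field 'k in the variables z_0, z_1, ... (0-indexed):
  a monomial is an exponent vector nat to nat finitely supported, a polynomial a finitely
  supported map from monomials to coefficients.\<close>

type_synonym 'k mpoly = "(nat \<Rightarrow>\<^sub>0 nat) \<Rightarrow>\<^sub>0 'k"

definition Var :: "nat \<Rightarrow> 'k::field mpoly" where
  "Var i = Poly_Mapping.single (Poly_Mapping.single i 1) 1"

definition Const :: "'k::field \<Rightarrow> 'k mpoly" where
  "Const c = Poly_Mapping.single 0 c"

definition polys_in :: "nat set \<Rightarrow> 'k::field mpoly set" where
  "polys_in I = {p. \<forall>m \<in> Poly_Mapping.keys p. Poly_Mapping.keys m \<subseteq> I}"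

text \<open>P_n = k[z_1,...,z_n], rendered with the variables z_0, ..., z_(n-1).\<close>
abbreviation Pn :: "nat \<Rightarrow> 'k::field mpoly set" where
  "Pn n \<equiv> polys_in {..<n}"

definition is_aut :: "nat \<Rightarrow> ('k::field mpoly \<Rightarrow> 'k mpoly) \<Rightarrow> bool" where
  "is_aut n s \<longleftrightarrow> bij_betw s (Pn n) (Pn n) \<and>
     (\<forall>p\<in>Pn n. \<forall>q\<in>Pn n. s (p + q) = s p + s q \<and> s (p * q) = s p * s q) \<and>
     s 1 = 1 \<and> (\<forall>c. \<forall>p\<in>Pn n. s (Const c * p) = Const c * s p)"

definition conjugate :: "nat \<Rightarrow> ('k::field mpoly \<Rightarrow> 'k mpoly) \<Rightarrow> ('k mpoly \<Rightarrow> 'k mpoly) \<Rightarrow> bool" where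
  "conjugate n s t \<longleftrightarrow> (\<exists>e. is_aut n e \<and> (\<forall>p\<in>Pn n. t p = inv_into (Pn n) e (s (e p))))"

definition triangular :: "nat \<Rightarrow> ('k::field mpoly \<Rightarrow> 'k mpoly) \<Rightarrow> bool" where
  "triangular n t \<longleftrightarrow> is_aut n t \<and>
     (\<forall>i<n. \<exists>l g. l \<noteq> 0 \<and> g \<in> polys_in {i<..<n} \<and> t (Var i) = Const l * Var i + g)"

inductive_set gen_ring :: "'b::ring_1 set \<Rightarrow> 'b set" for S where
  base: "s \<in> S \<Longrightarrow> s \<in> gen_ring S"
| one: "1 \<in> gen_ring S"
| uminus: "u \<in> gen_ring S \<Longrightarrow> - u \<in> gen_ring S"
| add: "u \<in> gen_ring S \<Longrightarrow> v \<in> gen_ring S \<Longrightarrow> u + v \<in> gen_ring S"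
| mult: "u \<in> gen_ring S \<Longrightarrow> v \<in> gen_ring S \<Longrightarrow> u * v \<in> gen_ring S"

text \<open>B (with ring embedding phi of P_n and elements x, y) is the generalized Weyl
  algebra P_n(sigma, a): generated by phi(P_n), x, y subject to the defining relations,
  and free as a left P_n-module on x^i (i \<ge> 0), y^j (j \<ge> 1).\<close>
definition is_GWA :: "nat \<Rightarrow> ('k::field mpoly \<Rightarrow> 'k mpoly) \<Rightarrow> 'k mpoly \<Rightarrow>
    ('k mpoly \<Rightarrow> 'b::ring_1) \<Rightarrow> 'b \<Rightarrow> 'b \<Rightarrow> bool" where
  "is_GWA n s a phi x y \<longleftrightarrow>
     inj_on phi (Pn n) \<and> phi 1 = 1 \<and>
     (\<forall>p\<in>Pn n. \<forall>q\<in>Pn n. phi (p + q) = phi p + phi q \<and> phi (p * q) = phi p * phi q) \<and>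
     (\<forall>d\<in>Pn n. x * phi d = phi (s d) * x \<and> y * phi d = phi (inv_into (Pn n) s d) * y) \<and>
     y * x = phi a \<and> x * y = phi (s a) \<and>
     gen_ring (phi ` Pn n \<union> {x, y}) = UNIV \<and>
     (\<forall>N d e. (\<forall>i. d i \<in> Pn n) \<and> (\<forall>j. e j \<in> Pn n) \<and>
        (\<Sum>i\<le>N. phi (d i) * x ^ i) + (\<Sum>j\<in>{1..N}. phi (e j) * y ^ j) = 0 \<longrightarrow>
        (\<forall>i\<le>N. d i = 0) \<and> (\<forall>j\<in>{1..N}. e j = 0))"

text \<open>Gelfand-Kirillov dimension of a k-algebra B, whose k-vector space structure is
  given by scale. V^i = span of products of i elements of V; V^0 = k 1.\<close>
fun prods :: "'b::ring_1 set \<Rightarrow> nat \<Rightarrow> 'b set" where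
  "prods V 0 = {1}"
| "prods V (Suc i) = {v * w | v w. v \<in> V \<and> w \<in> prods V i}"

definition GKdim :: "('k::field \<Rightarrow> 'b::ring_1 \<Rightarrow> 'b) \<Rightarrow> ereal" where
  "GKdim scale = (SUP V \<in> {V. module.span scale V = V \<and> (\<exists>S. finite S \<and> V = module.span scale S)}.
     limsup (\<lambda>m. ereal (log (real m)
        (real (vector_space.dim scale (module.span scale (\<Union>i\<le>m. prods V i)))))))"

end

theory Submission
  imports Defs "HOL-Library.FuncSet"
begin

text \<open>The lower bound \<open>n + 1\<close> holds for every generalized Weyl algebra: by freeness over
  \<open>P_n\<close>, the elements \<open>z^\<alpha> x^j\<close> with all exponents at most \<open>q\<close> are linearly independent, and
  they lie in \<open>V^((n+1)q)\<close> for \<open>V\<close> spanned by \<open>1, x, y, z_1, ..., z_n\<close>.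

  For the upper bound, the hypothesis makes \<open>\<sigma>\<close> and \<open>\<sigma>^-1\<close> locally finite: the orbits of a
  triangular automorphism and of its inverse have bounded exponents (by downward induction
  on the index of the variable), and this property passes to conjugates and to \<open>m\<close>-th roots.
  Commuting \<open>x\<close> and \<open>y\<close> past polynomials, every product of \<open>M\<close> generators becomes \<open>p x^i\<close>
  or \<open>p y^i\<close> with \<open>i \<le> M\<close> and \<open>p\<close> a product of at most \<open>M\<close> elements of the orbits of
  \<open>a, z_1, ..., z_n\<close> under \<open>\<sigma>\<close> and \<open>\<sigma>^-1\<close>. The exponents of \<open>p\<close> are thus \<open>O(M)\<close>, so \<open>V^M\<close>
  lies in a space of dimension \<open>O(M^(n+1))\<close>.\<close>

section \<open>Polynomials\<close>

lemma Const_add: "Const (c + d) = Const c + Const d"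
  by (simp add: Const_def single_add)

lemma Const_mult: "Const (c * d) = Const c * Const d"
  by (simp add: Const_def mult_single)

lemma Const_one [simp]: "Const 1 = 1"
  by (simp add: Const_def)

lemma Const_zero [simp]: "Const 0 = 0"
  by (simp add: Const_def)

lemma keys_Const_mult: "Poly_Mapping.keys (Const c * p) \<subseteq> Poly_Mapping.keys p"
  using keys_mult[of "Const c" p] by (auto simp: Const_def split: if_splits)

lemma polys_in_zero: "0 \<in> polys_in I"
  by (simp add: polys_in_def)

lemma polys_in_one: "1 \<in> polys_in I"
  by (simp add: polys_in_def)

lemma polys_in_add: "p \<in> polys_in I \<Longrightarrow> q \<in> polys_in I \<Longrightarrow> p + q \<in> polys_in I"
  using keys_add[of p q] by (auto simp: polys_in_def)

lemma polys_in_mult: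
  assumes "p \<in> polys_in I" "q \<in> polys_in I"
  shows "p * q \<in> polys_in I"
proof -
  have "Poly_Mapping.keys \<gamma> \<subseteq> I" if \<gamma>_in: "\<gamma> \<in> Poly_Mapping.keys (p * q)" for \<gamma>
  proof -
    obtain \<alpha> \<beta> where \<gamma>: "\<gamma> = \<alpha> + \<beta>"
      and "\<alpha> \<in> Poly_Mapping.keys p" "\<beta> \<in> Poly_Mapping.keys q"
      using keys_mult[of p q] \<gamma>_in by blast
    then have "Poly_Mapping.keys \<alpha> \<subseteq> I" "Poly_Mapping.keys \<beta> \<subseteq> I"
      using assms by (auto simp: polys_in_def)
    then show ?thesis
      using keys_add[of \<alpha> \<beta>] \<gamma> by blast
  qed
  then show ?thesis
    by (simp add: polys_in_def)
qed

lemma polys_in_Const_mult: "p \<in> polys_in I \<Longrightarrow> Const c * p \<in> polys_in I"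
  using keys_Const_mult[of c p] by (auto simp: polys_in_def)

lemma polys_in_Const: "Const c \<in> polys_in I"
  by (simp add: polys_in_def Const_def)

lemma polys_in_Var: "i \<in> I \<Longrightarrow> Var i \<in> polys_in I"
  by (simp add: polys_in_def Var_def)

lemma polys_in_sum: "(\<And>x. x \<in> A \<Longrightarrow> f x \<in> polys_in I) \<Longrightarrow> sum f A \<in> polys_in I"
  by (induction A rule: infinite_finite_induct) (auto intro: polys_in_zero polys_in_add)

lemma polys_in_prod: "(\<And>x. x \<in> A \<Longrightarrow> f x \<in> polys_in I) \<Longrightarrow> prod f A \<in> polys_in I"
  by (induction A rule: infinite_finite_induct) (auto intro: polys_in_one polys_in_mult)

lemma polys_in_power: "p \<in> polys_in I \<Longrightarrow> p ^ k \<in> polys_in I"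
  by (induction k) (auto intro: polys_in_one polys_in_mult)

lemma polys_in_prod_list: "set ps \<subseteq> polys_in I \<Longrightarrow> prod_list ps \<in> polys_in I"
  by (induction ps) (auto intro: polys_in_one polys_in_mult)

lemma polys_in_Pn: "I \<subseteq> {..<n} \<Longrightarrow> p \<in> polys_in I \<Longrightarrow> p \<in> Pn n"
  by (auto simp: polys_in_def)

lemma keys_subset_if_polys_in:
  "p \<in> polys_in I \<Longrightarrow> \<alpha> \<in> Poly_Mapping.keys p \<Longrightarrow> Poly_Mapping.keys \<alpha> \<subseteq> I"
  by (simp add: polys_in_def)

lemma poly_mapping_eq_sum_single:
  "f = (\<Sum>i\<in>Poly_Mapping.keys f. Poly_Mapping.single i (Poly_Mapping.lookup f i))"
  by (rule poly_mapping_eqI) (auto simp: lookup_sum lookup_single when_def in_keys_iff)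

definition monomial :: "(nat \<Rightarrow>\<^sub>0 nat) \<Rightarrow> 'k::field mpoly" where
  "monomial \<alpha> = Poly_Mapping.single \<alpha> 1"

lemma monomial_zero [simp]: "monomial 0 = 1"
  by (simp add: monomial_def)

lemma monomial_add: "monomial (\<alpha> + \<beta>) = monomial \<alpha> * monomial \<beta>"
  by (simp add: monomial_def mult_single)

lemma monomial_sum: "monomial (sum f A) = (\<Prod>x\<in>A. monomial (f x))"
  by (induction A rule: infinite_finite_induct) (simp_all add: monomial_add)

lemma monomial_single: "monomial (Poly_Mapping.single i k) = Var i ^ k"
proof (induction k)
  case 0
  then show ?case by (simp add: monomial_def)
next
  case (Suc k)
  have "Poly_Mapping.single i (Suc k) = Poly_Mapping.single i 1 + Poly_Mapping.single i k"
    by (simp flip: single_add)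
  then show ?case
    using Suc.IH by (simp only: monomial_add) (simp add: monomial_def Var_def)
qed

lemma monomial_eq_prod_Var:
  "monomial \<alpha> = (\<Prod>i\<in>Poly_Mapping.keys \<alpha>. Var i ^ Poly_Mapping.lookup \<alpha> i)"
  by (subst poly_mapping_eq_sum_single) (simp add: monomial_sum monomial_single)

lemma Const_mult_monomial: "Const c * monomial \<alpha> = Poly_Mapping.single \<alpha> c"
  by (simp add: monomial_def Const_def mult_single)

lemma mpoly_eq_sum_monomials:
  "p = (\<Sum>\<alpha>\<in>Poly_Mapping.keys p. Const (Poly_Mapping.lookup p \<alpha>) * monomial \<alpha>)"
  by (subst poly_mapping_eq_sum_single) (simp add: Const_mult_monomial)

lemma polys_in_monomial: "Poly_Mapping.keys \<alpha> \<subseteq> I \<Longrightarrow> monomial \<alpha> \<in> polys_in I"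
  by (simp add: polys_in_def monomial_def)

lemma lookup_sum_Const_mult_monomial:
  assumes "finite A" "\<alpha> \<in> A"
  shows "Poly_Mapping.lookup (\<Sum>\<beta>\<in>A. Const (c \<beta>) * monomial \<beta>) \<alpha> = c \<alpha>"
  using assms by (simp add: lookup_sum Const_mult_monomial lookup_single when_def)

definition in_box :: "nat \<Rightarrow> 'k::field mpoly \<Rightarrow> bool" where
  "in_box D p \<longleftrightarrow> (\<forall>\<alpha>\<in>Poly_Mapping.keys p. \<forall>i. Poly_Mapping.lookup \<alpha> i \<le> D)"

lemma in_box_mono: "in_box D p \<Longrightarrow> D \<le> D' \<Longrightarrow> in_box D' p"
  unfolding in_box_def using le_trans by blast

lemma in_box_zero: "in_box D 0"
  by (simp add: in_box_def)

lemma in_box_one: "in_box D 1"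
  by (simp add: in_box_def)

lemma in_box_Var: "in_box 1 (Var i)"
  by (simp add: in_box_def Var_def lookup_single when_def)

lemma in_box_add: "in_box D p \<Longrightarrow> in_box D q \<Longrightarrow> in_box D (p + q)"
  using keys_add[of p q] by (auto simp: in_box_def)

lemma in_box_Const_mult: "in_box D p \<Longrightarrow> in_box D (Const c * p)"
  using keys_Const_mult[of c p] by (auto simp: in_box_def)

lemma in_box_mult: "in_box D p \<Longrightarrow> in_box E q \<Longrightarrow> in_box (D + E) (p * q)"
  using keys_mult[of p q] by (fastforce simp: in_box_def lookup_add intro: add_mono)

lemma in_box_power: "in_box D p \<Longrightarrow> in_box (D * k) (p ^ k)"
proof (induction k)
  case 0
  then show ?case by (simp add: in_box_one)
next
  case (Suc k)
  then have "in_box (D + D * k) (p * p ^ k)"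
    by (intro in_box_mult)
  then show ?case by (simp add: algebra_simps)
qed

lemma in_box_sum: "(\<And>x. x \<in> A \<Longrightarrow> in_box D (f x)) \<Longrightarrow> in_box D (sum f A)"
  by (induction A rule: infinite_finite_induct) (auto intro: in_box_zero in_box_add)

lemma in_box_prod: "(\<And>x. x \<in> A \<Longrightarrow> in_box (D x) (f x)) \<Longrightarrow> in_box (\<Sum>x\<in>A. D x) (\<Prod>x\<in>A. f x)"
  by (induction A rule: infinite_finite_induct) (auto intro: in_box_one in_box_mult)

lemma in_box_prod_list: "(\<And>p. p \<in> set ps \<Longrightarrow> in_box D p) \<Longrightarrow> in_box (D * length ps) (prod_list ps)"
proof (induction ps)
  case Nil
  then show ?case by (simp add: in_box_one)
next
  case (Cons p ps)
  then have "in_box (D + D * length ps) (p * prod_list ps)"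
    by (intro in_box_mult) auto
  then show ?case by simp
qed

lemma in_box_exists: "\<exists>D. in_box D p"
proof -
  have "Poly_Mapping.lookup \<alpha> i \<le> (\<Sum>\<beta>\<in>Poly_Mapping.keys p. \<Sum>j\<in>Poly_Mapping.keys \<beta>. Poly_Mapping.lookup \<beta> j)"
    if "\<alpha> \<in> Poly_Mapping.keys p" for \<alpha> i
  proof -
    have "Poly_Mapping.lookup \<alpha> i \<le> (\<Sum>j\<in>Poly_Mapping.keys \<alpha>. Poly_Mapping.lookup \<alpha> j)"
      by (cases "i \<in> Poly_Mapping.keys \<alpha>") (auto intro: member_le_sum simp: in_keys_iff)
    also have "\<dots> \<le> (\<Sum>\<beta>\<in>Poly_Mapping.keys p. \<Sum>j\<in>Poly_Mapping.keys \<beta>. Poly_Mapping.lookup \<beta> j)"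
      using that by (intro member_le_sum) auto
    finally show ?thesis .
  qed
  then show ?thesis
    unfolding in_box_def by blast
qed

lemma in_box_uniform:
  assumes "finite I" and "\<And>i. i \<in> I \<Longrightarrow> \<exists>D. \<forall>j. in_box D (f i j)"
  shows "\<exists>D. \<forall>i\<in>I. \<forall>j. in_box D (f i j)"
proof -
  obtain D where D: "\<And>i j. i \<in> I \<Longrightarrow> in_box (D i) (f i j)"
    using assms(2) by metis
  have "in_box (\<Sum>i\<in>I. D i) (f i j)" if "i \<in> I" for i j
    using D[OF that] by (rule in_box_mono) (intro member_le_sum that assms(1) zero_le)
  then show ?thesis by blast
qed

definition box_monomials :: "nat \<Rightarrow> nat \<Rightarrow> (nat \<Rightarrow>\<^sub>0 nat) set" where
  "box_monomials n D =
     {\<alpha>. Poly_Mapping.keys \<alpha> \<subseteq> {..<n} \<and> (\<forall>i. Poly_Mapping.lookup \<alpha> i \<le> D)}"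

lemma keys_subset_box_monomials:
  "p \<in> Pn n \<Longrightarrow> in_box D p \<Longrightarrow> Poly_Mapping.keys p \<subseteq> box_monomials n D"
  by (auto simp: box_monomials_def polys_in_def in_box_def)

lemma bij_betw_box_monomials:
  "bij_betw (\<lambda>\<alpha>. restrict (Poly_Mapping.lookup \<alpha>) {..<n}) (box_monomials n D) (PiE {..<n} (\<lambda>_. {..D}))"
proof (rule bij_betw_byWitness)
  let ?g = "\<lambda>f. Abs_poly_mapping (\<lambda>i. if i < n then f i else 0 :: nat)"
  have lookup_g: "Poly_Mapping.lookup (?g f) = (\<lambda>i. if i < n then f i else 0)" for f
    by (rule Abs_poly_mapping_inverse) (auto intro: finite_subset[of _ "{..<n}"])
  show "\<forall>\<alpha>\<in>box_monomials n D. ?g (restrict (Poly_Mapping.lookup \<alpha>) {..<n}) = \<alpha>"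
    by (auto intro!: poly_mapping_eqI simp: lookup_g box_monomials_def in_keys_iff)
  show "\<forall>f\<in>PiE {..<n} (\<lambda>_. {..D}). restrict (Poly_Mapping.lookup (?g f)) {..<n} = f"
    by (auto simp: lookup_g PiE_def extensional_def)
  show "(\<lambda>\<alpha>. restrict (Poly_Mapping.lookup \<alpha>) {..<n}) ` box_monomials n D \<subseteq> PiE {..<n} (\<lambda>_. {..D})"
    by (rule image_subsetI, unfold box_monomials_def, subst restrict_PiE_iff) auto
  show "?g ` PiE {..<n} (\<lambda>_. {..D}) \<subseteq> box_monomials n D"
  proof (rule image_subsetI)
    fix f assume "f \<in> PiE {..<n} (\<lambda>_. {..D})"
    then show "?g f \<in> box_monomials n D"
      unfolding box_monomials_def subset_iff in_keys_iff lookup_g by (auto simp: PiE_iff)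
  qed
qed

lemma finite_box_monomials: "finite (box_monomials n D)"
  using bij_betw_finite[OF bij_betw_box_monomials] by (simp add: finite_PiE)

lemma card_box_monomials: "card (box_monomials n D) = (D + 1) ^ n"
  using bij_betw_same_card[OF bij_betw_box_monomials] by (simp add: card_PiE)

section \<open>Endomorphisms of \<open>P_n\<close> with bounded orbits\<close>

definition is_endo :: "nat \<Rightarrow> ('k::field mpoly \<Rightarrow> 'k mpoly) \<Rightarrow> bool" where
  "is_endo n f \<longleftrightarrow>
     (\<forall>p\<in>Pn n. \<forall>q\<in>Pn n. f (p + q) = f p + f q \<and> f (p * q) = f p * f q) \<and>
     f 1 = 1 \<and> (\<forall>c. \<forall>p\<in>Pn n. f (Const c * p) = Const c * f p) \<and> (\<forall>p\<in>Pn n. f p \<in> Pn n)"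

context
  fixes n :: nat and f :: "'k::field mpoly \<Rightarrow> 'k mpoly"
  assumes endo: "is_endo n f"
begin

lemma endo_add: "p \<in> Pn n \<Longrightarrow> q \<in> Pn n \<Longrightarrow> f (p + q) = f p + f q"
  using endo by (simp add: is_endo_def)

lemma endo_mult: "p \<in> Pn n \<Longrightarrow> q \<in> Pn n \<Longrightarrow> f (p * q) = f p * f q"
  using endo by (simp add: is_endo_def)

lemma endo_one: "f 1 = 1"
  using endo by (simp add: is_endo_def)

lemma endo_Const_mult: "p \<in> Pn n \<Longrightarrow> f (Const c * p) = Const c * f p"
  using endo by (simp add: is_endo_def)

lemma endo_Pn: "p \<in> Pn n \<Longrightarrow> f p \<in> Pn n"
  using endo by (simp add: is_endo_def)

lemma endo_Const: "f (Const c) = Const c"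
  using endo_Const_mult[of 1 c] by (simp add: polys_in_one endo_one)

lemma endo_sum: "(\<And>x. x \<in> A \<Longrightarrow> g x \<in> Pn n) \<Longrightarrow> f (sum g A) = (\<Sum>x\<in>A. f (g x))"
  using endo_Const[of 0]
  by (induction A rule: infinite_finite_induct) (simp_all add: endo_add polys_in_sum)

lemma endo_prod: "(\<And>x. x \<in> A \<Longrightarrow> g x \<in> Pn n) \<Longrightarrow> f (prod g A) = (\<Prod>x\<in>A. f (g x))"
  by (induction A rule: infinite_finite_induct) (simp_all add: endo_one endo_mult polys_in_prod)

lemma endo_power: "p \<in> Pn n \<Longrightarrow> f (p ^ k) = f p ^ k"
  by (induction k) (simp_all add: endo_one endo_mult polys_in_power)

lemma endo_prod_list: "set ps \<subseteq> Pn n \<Longrightarrow> f (prod_list ps) = prod_list (map f ps)"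
  by (induction ps) (simp_all add: endo_one endo_mult polys_in_prod_list)

end

lemma is_endo_id: "is_endo n id"
  by (simp add: is_endo_def)

lemma is_endo_comp: "is_endo n f \<Longrightarrow> is_endo n g \<Longrightarrow> is_endo n (f \<circ> g)"
  by (simp add: is_endo_def)

lemma is_endo_funpow: "is_endo n f \<Longrightarrow> is_endo n (f ^^ j)"
  by (induction j) (simp_all add: is_endo_id is_endo_comp)

lemma funpow_Pn: "is_endo n f \<Longrightarrow> p \<in> Pn n \<Longrightarrow> (f ^^ j) p \<in> Pn n"
  using endo_Pn[OF is_endo_funpow] by blast

lemma is_aut_is_endo: "is_aut n s \<Longrightarrow> is_endo n s"
  unfolding is_aut_def is_endo_def bij_betw_def by auto

lemma is_aut_inv_into:
  assumes "is_aut n s"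
  shows "is_aut n (inv_into (Pn n) s)"
proof -
  let ?g = "inv_into (Pn n) s"
  have bij: "bij_betw s (Pn n) (Pn n)"
    using assms by (simp add: is_aut_def)
  have endo: "is_endo n s"
    using assms by (rule is_aut_is_endo)
  have bij_g: "bij_betw ?g (Pn n) (Pn n)"
    by (rule bij_betw_inv_into[OF bij])
  have g_Pn: "?g p \<in> Pn n" if "p \<in> Pn n" for p
    using bij_g that by (auto simp: bij_betw_def)
  have s_g: "s (?g p) = p" if "p \<in> Pn n" for p
    using bij that by (simp add: bij_betw_def f_inv_into_f)
  have g_s: "?g (s p) = p" if "p \<in> Pn n" for p
    using bij that by (simp add: bij_betw_def inv_into_f_f)
  have "?g (p + q) = ?g p + ?g q" "?g (p * q) = ?g p * ?g q" "?g (Const c * p) = Const c * ?g p"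
    if "p \<in> Pn n" "q \<in> Pn n" for p q c
    using that g_s[of "?g p + ?g q"] g_s[of "?g p * ?g q"] g_s[of "Const c * ?g p"]
    by (simp_all add: g_Pn s_g endo_add[OF endo] endo_mult[OF endo] endo_Const_mult[OF endo]
        polys_in_add polys_in_mult polys_in_Const_mult)
  moreover have "?g 1 = 1"
    using g_s[of 1] by (simp add: endo_one[OF endo] polys_in_one)
  ultimately show ?thesis
    unfolding is_aut_def using bij_g polys_in_one by blast
qed

lemma inv_into_funpow_cancel:
  assumes "is_aut n s" "u \<in> Pn n"
  shows "(inv_into (Pn n) s ^^ k) ((s ^^ k) u) = u"
proof (induction k)
  case 0
  then show ?case by simp
next
  case (Suc k)
  let ?g = "inv_into (Pn n) s"
  have "?g ^^ Suc k = (?g ^^ k) \<circ> ?g"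
    by (rule funpow_Suc_right)
  then have "(?g ^^ Suc k) ((s ^^ Suc k) u) = (?g ^^ k) (?g (s ((s ^^ k) u)))"
    by simp
  also have "?g (s ((s ^^ k) u)) = (s ^^ k) u"
    using assms(1) funpow_Pn[OF is_aut_is_endo[OF assms(1)] assms(2)]
    by (simp add: is_aut_def bij_betw_def inv_into_f_f)
  finally show ?case
    using Suc by simp
qed

lemma in_box_endo_image:
  assumes endo: "is_endo n f" and I: "I \<subseteq> {..<n}" and E: "\<And>i. i \<in> I \<Longrightarrow> in_box E (f (Var i))"
    and p: "p \<in> polys_in I" and D: "in_box D p"
  shows "in_box (n * D * E) (f p)"
proof -
  have keys_I: "Poly_Mapping.keys \<alpha> \<subseteq> I" if "\<alpha> \<in> Poly_Mapping.keys p" for \<alpha>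
    using p that by (rule keys_subset_if_polys_in)
  have monomial_Pn: "monomial \<alpha> \<in> Pn n" if "\<alpha> \<in> Poly_Mapping.keys p" for \<alpha>
    using keys_I[OF that] I by (intro polys_in_monomial) auto
  have f_monomial: "in_box (n * D * E) (f (monomial \<alpha>))" if \<alpha>: "\<alpha> \<in> Poly_Mapping.keys p" for \<alpha>
  proof -
    have Var_Pn: "Var i \<in> Pn n" if "i \<in> Poly_Mapping.keys \<alpha>" for i
      using keys_I[OF \<alpha>] I that by (auto intro: polys_in_Var)
    have "f (monomial \<alpha>) = (\<Prod>i\<in>Poly_Mapping.keys \<alpha>. f (Var i) ^ Poly_Mapping.lookup \<alpha> i)"
      unfolding monomial_eq_prod_Var
      by (simp add: endo_prod[OF endo] endo_power[OF endo] Var_Pn polys_in_power)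
    moreover have "in_box (\<Sum>i\<in>Poly_Mapping.keys \<alpha>. E * Poly_Mapping.lookup \<alpha> i)
        (\<Prod>i\<in>Poly_Mapping.keys \<alpha>. f (Var i) ^ Poly_Mapping.lookup \<alpha> i)"
      using E keys_I[OF \<alpha>] by (intro in_box_prod in_box_power) auto
    moreover have "(\<Sum>i\<in>Poly_Mapping.keys \<alpha>. E * Poly_Mapping.lookup \<alpha> i) \<le> n * D * E"
    proof -
      have "(\<Sum>i\<in>Poly_Mapping.keys \<alpha>. E * Poly_Mapping.lookup \<alpha> i) \<le> (\<Sum>i\<in>Poly_Mapping.keys \<alpha>. E * D)"
        using D \<alpha> by (intro sum_mono) (simp add: in_box_def)
      also have "\<dots> = card (Poly_Mapping.keys \<alpha>) * (E * D)"
        by simp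
      also have "\<dots> \<le> n * (E * D)"
        using card_mono[of "{..<n}" "Poly_Mapping.keys \<alpha>"] keys_I[OF \<alpha>] I by simp
      finally show ?thesis by (simp add: algebra_simps)
    qed
    ultimately show ?thesis by (auto intro: in_box_mono)
  qed
  have "f p = (\<Sum>\<alpha>\<in>Poly_Mapping.keys p. Const (Poly_Mapping.lookup p \<alpha>) * f (monomial \<alpha>))"
    by (subst mpoly_eq_sum_monomials)
      (simp add: endo_sum[OF endo] endo_Const_mult[OF endo] monomial_Pn polys_in_Const_mult)
  then show ?thesis
    by (simp add: in_box_sum in_box_Const_mult f_monomial)
qed

text \<open>Equivalently, every orbit of \<open>f\<close> spans a finite-dimensional subspace of \<open>P_n\<close>.\<close>

definition bounded_orbits :: "nat \<Rightarrow> ('k::field mpoly \<Rightarrow> 'k mpoly) \<Rightarrow> bool" where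
  "bounded_orbits n f \<longleftrightarrow> (\<forall>p\<in>Pn n. \<exists>D. \<forall>j. in_box D ((f ^^ j) p))"

lemma bounded_orbitsI:
  assumes endo: "is_endo n f" and Var: "\<And>i. i < n \<Longrightarrow> \<exists>E. \<forall>j. in_box E ((f ^^ j) (Var i))"
  shows "bounded_orbits n f"
  unfolding bounded_orbits_def
proof
  fix p :: "'a mpoly" assume p: "p \<in> Pn n"
  obtain E where E: "\<forall>i\<in>{..<n}. \<forall>j. in_box E ((f ^^ j) (Var i))"
    using in_box_uniform[of "{..<n}" "\<lambda>i j. (f ^^ j) (Var i)"] Var by auto
  obtain D where D: "in_box D p"
    using in_box_exists by blast
  have "in_box (n * D * E) ((f ^^ j) p)" for j
    using E by (intro in_box_endo_image[OF is_endo_funpow[OF endo] order_refl _ p D]) auto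
  then show "\<exists>D. \<forall>j. in_box D ((f ^^ j) p)" by blast
qed

text \<open>A triangular automorphism \<open>\<tau>\<close> has this shape with \<open>k = 0\<close>. Its inverse has it with
  \<open>k = 1\<close>: from \<open>\<tau>(z_i) = \<lambda> z_i + g\<close> we get \<open>\<tau>^-1(z_i) = \<lambda>^-1 z_i + \<tau>^-1(- \<lambda>^-1 g)\<close>, and
  \<open>\<tau>^-1\<close> is not yet known to preserve \<open>k[z_(i+1), ..., z_n]\<close>.\<close>

definition quasi_triangular :: "nat \<Rightarrow> ('k::field mpoly \<Rightarrow> 'k mpoly) \<Rightarrow> bool" where
  "quasi_triangular n f \<longleftrightarrow>
     (\<forall>i<n. \<exists>c k g. g \<in> polys_in {i<..<n} \<and> f (Var i) = Const c * Var i + (f ^^ k) g)"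

lemma funpow_Var_recurrence:
  assumes endo: "is_endo n f" and i: "i < n" and g: "g \<in> Pn n"
    and f_Var: "f (Var i) = Const c * Var i + (f ^^ k) g"
  shows "(f ^^ Suc j) (Var i) = Const c * (f ^^ j) (Var i) + (f ^^ (j + k)) g"
proof -
  have "(f ^^ Suc j) (Var i) = (f ^^ j) (Const c * Var i + (f ^^ k) g)"
    by (simp add: funpow_Suc_right f_Var del: funpow.simps)
  also have "\<dots> = Const c * (f ^^ j) (Var i) + (f ^^ (j + k)) g"
    using is_endo_funpow[OF endo, of j] i g
    by (simp add: endo_add endo_Const_mult polys_in_Const_mult polys_in_Var funpow_Pn[OF endo]
        funpow_add)
  finally show ?thesis .
qed

lemma orbit_Var_bounded:
  assumes endo: "is_endo n f" and i: "i < n" and g: "g \<in> polys_in {i<..<n}"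
    and f_Var: "f (Var i) = Const c * Var i + (f ^^ k) g"
    and later: "\<And>i' j. i' \<in> {i<..<n} \<Longrightarrow> in_box E ((f ^^ j) (Var i'))"
  shows "\<exists>B. \<forall>j. in_box B ((f ^^ j) (Var i))"
proof -
  have g_Pn: "g \<in> Pn n"
    using g by (rule polys_in_Pn[rotated]) auto
  obtain D where D: "in_box D g"
    using in_box_exists by blast
  define B where "B = max 1 (n * D * E)"
  have "in_box (n * D * E) ((f ^^ j) g)" for j
    using later by (intro in_box_endo_image[OF is_endo_funpow[OF endo] _ _ g D]) auto
  then have g_orbit: "in_box B ((f ^^ j) g)" for j
    by (rule in_box_mono) (simp add: B_def)
  have "in_box B ((f ^^ j) (Var i))" for j
  proof (induction j)
    case 0
    have "in_box B (Var i)"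
      using in_box_Var[of i] by (rule in_box_mono) (simp add: B_def)
    then show ?case by simp
  next
    case (Suc j)
    then show ?case
      using funpow_Var_recurrence[OF endo i g_Pn f_Var] g_orbit
      by (simp add: in_box_add in_box_Const_mult)
  qed
  then show ?thesis by blast
qed

lemma quasi_triangular_bounded_orbits:
  assumes endo: "is_endo n f" and qt: "quasi_triangular n f"
  shows "bounded_orbits n f"
proof (rule bounded_orbitsI[OF endo])
  fix i assume "i < n"
  then show "\<exists>E. \<forall>j. in_box E ((f ^^ j) (Var i))"
  proof (induction "n - i" arbitrary: i rule: less_induct)
    case less
    obtain c k g where g: "g \<in> polys_in {i<..<n}" and f_Var: "f (Var i) = Const c * Var i + (f ^^ k) g"
      using qt less.prems by (auto simp: quasi_triangular_def)
    have "\<exists>E. \<forall>j. in_box E ((f ^^ j) (Var i'))" if "i' \<in> {i<..<n}" for i'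
      using less.hyps that by auto
    then obtain E where "\<forall>i'\<in>{i<..<n}. \<forall>j. in_box E ((f ^^ j) (Var i'))"
      using in_box_uniform[of "{i<..<n}" "\<lambda>i' j. (f ^^ j) (Var i')"] by auto
    then show ?case
      using orbit_Var_bounded[OF endo less.prems g f_Var] by blast
  qed
qed

lemma triangular_quasi_triangular: "triangular n t \<Longrightarrow> quasi_triangular n t"
  unfolding triangular_def quasi_triangular_def by (metis funpow_0)

lemma triangular_inv_quasi_triangular:
  assumes tr: "triangular n t"
  shows "quasi_triangular n (inv_into (Pn n) t)"
  unfolding quasi_triangular_def
proof (intro allI impI)
  let ?v = "inv_into (Pn n) t"
  fix i assume i: "i < n"
  have aut: "is_aut n t"
    using tr by (simp add: triangular_def)
  have endo_v: "is_endo n ?v"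
    by (rule is_aut_is_endo[OF is_aut_inv_into[OF aut]])
  obtain l g where l: "l \<noteq> 0" and g: "g \<in> polys_in {i<..<n}" and t_Var: "t (Var i) = Const l * Var i + g"
    using tr i by (auto simp: triangular_def)
  have g_Pn: "g \<in> Pn n"
    using g by (rule polys_in_Pn[rotated]) auto
  have Var_Pn: "Var i \<in> Pn n"
    using i by (simp add: polys_in_Var)
  have "Var i = ?v (t (Var i))"
    using aut Var_Pn by (auto simp: is_aut_def bij_betw_def intro: inv_into_f_f[symmetric])
  also have "\<dots> = Const l * ?v (Var i) + ?v g"
    unfolding t_Var
    using endo_v by (simp add: endo_add endo_Const_mult polys_in_Const_mult Var_Pn g_Pn)
  finally have "Const (1 / l) * Var i = Const (1 / l) * (Const l * ?v (Var i) + ?v g)"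
    by (rule arg_cong)
  also have "\<dots> = ?v (Var i) + Const (1 / l) * ?v g"
    using l by (simp add: distrib_left mult.assoc[symmetric] flip: Const_mult)
  finally have v_Var: "Const (1 / l) * Var i = ?v (Var i) + Const (1 / l) * ?v g" .
  have "(?v ^^ 1) (Const (- (1 / l)) * g) = - (Const (1 / l) * ?v g)"
    using endo_Const_mult[OF endo_v g_Pn, of "- (1 / l)"] by (simp add: Const_def single_uminus)
  with v_Var have "?v (Var i) = Const (1 / l) * Var i + (?v ^^ 1) (Const (- (1 / l)) * g)"
    by (simp add: algebra_simps)
  moreover have "Const (- (1 / l)) * g \<in> polys_in {i<..<n}"
    using g by (rule polys_in_Const_mult)
  ultimately show "\<exists>c k h. h \<in> polys_in {i<..<n} \<and> ?v (Var i) = Const c * Var i + (?v ^^ k) h"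
    by blast
qed

lemma bounded_orbits_conj:
  assumes endo: "is_endo n f" and aut_e: "is_aut n e" and m: "m \<ge> 1"
    and conj: "\<And>p. p \<in> Pn n \<Longrightarrow> (f ^^ m) (e p) = e (h p)"
    and endo_h: "is_endo n h" and h: "bounded_orbits n h"
  shows "bounded_orbits n f"
  unfolding bounded_orbits_def
proof
  fix q :: "'a mpoly" assume q: "q \<in> Pn n"
  have endo_e: "is_endo n e"
    using aut_e by (rule is_aut_is_endo)
  have bij_e: "bij_betw e (Pn n) (Pn n)"
    using aut_e by (simp add: is_aut_def)
  have conj_power: "(f ^^ (m * j)) (e p) = e ((h ^^ j) p)" if "p \<in> Pn n" for p j
  proof (induction j)
    case 0
    then show ?case by simp
  next
    case (Suc j)
    have "(f ^^ (m * Suc j)) (e p) = (f ^^ m) ((f ^^ (m * j)) (e p))"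
      by (simp add: funpow_add)
    also have "\<dots> = e (h ((h ^^ j) p))"
      using Suc conj funpow_Pn[OF endo_h that] by simp
    finally show ?case by simp
  qed
  define p where "p \<rho> = inv_into (Pn n) e ((f ^^ \<rho>) q)" for \<rho>
  have p_Pn: "p \<rho> \<in> Pn n" and e_p: "e (p \<rho>) = (f ^^ \<rho>) q" for \<rho>
    unfolding p_def using bij_e funpow_Pn[OF endo q]
    by (auto simp: bij_betw_def intro: inv_into_into f_inv_into_f)
  obtain D where D: "\<forall>\<rho>\<in>{..<m}. \<forall>j. in_box D ((h ^^ j) (p \<rho>))"
    using in_box_uniform[of "{..<m}" "\<lambda>\<rho> j. (h ^^ j) (p \<rho>)"] h p_Pn
    by (auto simp: bounded_orbits_def)
  obtain E where E: "\<forall>i\<in>{..<n}. in_box E (e (Var i))"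
    using in_box_uniform[of "{..<n}" "\<lambda>i (j::nat). e (Var i)"] in_box_exists by auto
  have "in_box (n * D * E) ((f ^^ r) q)" for r
  proof -
    have "(f ^^ r) q = (f ^^ (m * (r div m))) ((f ^^ (r mod m)) q)"
      by (metis comp_apply funpow_add mult_div_mod_eq)
    also have "\<dots> = e ((h ^^ (r div m)) (p (r mod m)))"
      by (simp add: e_p[symmetric] conj_power p_Pn)
    finally show ?thesis
      using D E m by (auto intro!: in_box_endo_image[OF endo_e order_refl] funpow_Pn[OF endo_h p_Pn])
  qed
  then show "\<exists>D. \<forall>r. in_box D ((f ^^ r) q)" by blast
qed

lemma conjugate_intertwines:
  assumes "conjugate n f t" and endo: "is_endo n f"
  obtains e where "is_aut n e" "\<And>p. p \<in> Pn n \<Longrightarrow> f (e p) = e (t p)"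
proof -
  obtain e where aut_e: "is_aut n e" and t: "\<forall>p\<in>Pn n. t p = inv_into (Pn n) e (f (e p))"
    using assms(1) by (auto simp: conjugate_def)
  have "f (e p) = e (t p)" if "p \<in> Pn n" for p
  proof -
    have "f (e p) \<in> e ` Pn n"
      using aut_e that endo_Pn[OF endo] endo_Pn[OF is_aut_is_endo[OF aut_e]]
      by (simp add: is_aut_def bij_betw_def)
    then show ?thesis
      using t that by (simp add: f_inv_into_f)
  qed
  then show ?thesis
    using that aut_e by blast
qed

lemma intertwines_inverses:
  assumes g_f: "\<And>u. u \<in> Pn n \<Longrightarrow> g (f u) = u" and aut_t: "is_aut n t" and endo_e: "is_endo n e"
    and intertwine: "\<And>p. p \<in> Pn n \<Longrightarrow> f (e p) = e (t p)" and p: "p \<in> Pn n"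
  shows "g (e p) = e (inv_into (Pn n) t p)"
proof -
  let ?q = "inv_into (Pn n) t p"
  have q: "?q \<in> Pn n" and t_q: "t ?q = p"
    using aut_t p by (auto simp: is_aut_def bij_betw_def intro: inv_into_into f_inv_into_f)
  have "g (e p) = g (f (e ?q))"
    using intertwine[OF q] t_q by simp
  also have "\<dots> = e ?q"
    using g_f endo_Pn[OF endo_e q] by blast
  finally show ?thesis .
qed

lemma bounded_orbits_if_power_conj_triangular:
  assumes aut: "is_aut n s" and m: "m \<ge> 1" and tr: "triangular n t" and conj: "conjugate n (s ^^ m) t"
  shows "bounded_orbits n s" "bounded_orbits n (inv_into (Pn n) s)"
proof -
  have endo: "is_endo n s" and aut_t: "is_aut n t"
    using aut tr by (simp_all add: is_aut_is_endo triangular_def)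
  obtain e where aut_e: "is_aut n e" and intertwine: "\<And>p. p \<in> Pn n \<Longrightarrow> (s ^^ m) (e p) = e (t p)"
    using conjugate_intertwines[OF conj is_endo_funpow[OF endo]] by blast
  show "bounded_orbits n s"
    using bounded_orbits_conj[OF endo aut_e m intertwine] aut_t
      quasi_triangular_bounded_orbits[OF _ triangular_quasi_triangular[OF tr]]
    by (simp add: is_aut_is_endo)
  have "(inv_into (Pn n) s ^^ m) (e p) = e (inv_into (Pn n) t p)" if "p \<in> Pn n" for p
    using intertwines_inverses[OF inv_into_funpow_cancel[OF aut] aut_t is_aut_is_endo[OF aut_e]
        intertwine that] .
  then show "bounded_orbits n (inv_into (Pn n) s)"
    using bounded_orbits_conj[OF is_aut_is_endo[OF is_aut_inv_into[OF aut]] aut_e m]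
      is_aut_is_endo[OF is_aut_inv_into[OF aut_t]]
      quasi_triangular_bounded_orbits[OF _ triangular_inv_quasi_triangular[OF tr]]
    by blast
qed

section \<open>Growth of algebras over a field\<close>

lemma prods_mult: "u \<in> prods V i \<Longrightarrow> w \<in> prods V j \<Longrightarrow> u * w \<in> prods V (i + j)"
proof (induction i arbitrary: u)
  case 0
  then show ?case by simp
next
  case (Suc i)
  then obtain v u' where "u = v * u'" "v \<in> V" "u' \<in> prods V i"
    by auto
  then show ?case
    using Suc.IH[of u'] Suc.prems by (auto simp: mult.assoc)
qed

lemma power_in_prods: "v \<in> V \<Longrightarrow> v ^ k \<in> prods V k"
  by (induction k) auto

lemma prods_mono_left: "V \<subseteq> W \<Longrightarrow> prods V i \<subseteq> prods W i"
  by (induction i) auto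

lemma prods_mono_right:
  assumes "1 \<in> V" "i \<le> j"
  shows "prods V i \<subseteq> prods V j"
proof
  fix u assume "u \<in> prods V i"
  then have "1 ^ (j - i) * u \<in> prods V (j - i + i)"
    using assms(1) by (intro prods_mult power_in_prods)
  then show "u \<in> prods V j"
    using assms(2) by simp
qed

lemma finite_prods: "finite V \<Longrightarrow> finite (prods V i)"
proof (induction i)
  case 0
  then show ?case by simp
next
  case (Suc i)
  have "prods V (Suc i) = (\<lambda>(v, w). v * w) ` (V \<times> prods V i)"
    by auto
  then show ?case
    using Suc by simp
qed

lemma prods_prods: "prods (prods V r) i \<subseteq> prods V (r * i)"
proof (induction i)
  case 0
  then show ?case by simp
next
  case (Suc i)
  then show ?case
    using prods_mult[of _ V r _ "r * i"] by auto
qed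

lemma (in vector_space) card_le_dim_if_independent:
  assumes "finite F" "W \<subseteq> span F" "B \<subseteq> span W" "independent B"
  shows "card B \<le> dim W"
proof -
  obtain C where C: "C \<subseteq> W" "independent C" "W \<subseteq> span C" "card C = dim W"
    by (rule basis_exists)
  have "finite C"
    using independent_span_bound[OF assms(1) C(2)] C(1) assms(2) by blast
  moreover have "B \<subseteq> span C"
    using assms(3) span_minimal[OF C(3) subspace_span] by blast
  ultimately have "card B \<le> card C"
    using independent_span_bound[OF _ assms(4)] by blast
  then show ?thesis
    using C(4) by simp
qed

lemma ln_real_at_infinity: "filterlim (\<lambda>m::nat. ln (real m)) at_infinity sequentially"
  by (rule filterlim_at_top_imp_at_infinity)
    (rule filterlim_compose[OF ln_at_top filterlim_real_sequentially])

lemma limsup_log_le: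
  fixes f :: "nat \<Rightarrow> nat"
  assumes C: "C \<ge> 1" and bound: "\<And>m. m \<ge> 1 \<Longrightarrow> real (f m) \<le> C * real m ^ d"
  shows "limsup (\<lambda>m. ereal (log (real m) (real (f m)))) \<le> ereal (real d)"
proof -
  let ?g = "\<lambda>m::nat. ereal (real d + ln C / ln (real m))"
  have "eventually (\<lambda>m. ereal (log (real m) (real (f m))) \<le> ?g m) sequentially"
    using eventually_ge_at_top[of 2]
  proof eventually_elim
    case (elim m)
    then have m: "real m > 1"
      by simp
    show ?case
    proof (cases "f m = 0")
      case True
      then show ?thesis
        using C m by (simp add: log_def)
    next
      case False
      have "log (real m) (real (f m)) \<le> log (real m) (C * real m ^ d)"
        using False bound[of m] m by (subst log_le_cancel_iff) auto
      also have "\<dots> = log (real m) C + real d * log (real m) (real m)"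
        using C m by (simp add: log_mult log_nat_power)
      also have "\<dots> = real d + ln C / ln (real m)"
        using m by (simp add: log_def)
      finally show ?thesis by simp
    qed
  qed
  then have "limsup (\<lambda>m. ereal (log (real m) (real (f m)))) \<le> limsup ?g"
    by (rule Limsup_mono)
  also have "limsup ?g = ereal (real d)"
  proof (rule lim_imp_Limsup[OF trivial_limit_sequentially])
    have "(\<lambda>m::nat. real d + ln C / ln (real m)) \<longlonglongrightarrow> real d + 0"
      by (intro tendsto_add tendsto_const tendsto_divide_0[OF tendsto_const ln_real_at_infinity])
    then show "?g \<longlonglongrightarrow> ereal (real d)"
      by (simp add: lim_ereal)
  qed
  finally show ?thesis .
qed

lemma divide_power_le_of_bound:
  fixes f :: "nat \<Rightarrow> nat"
  assumes d: "d \<ge> 1" and bound: "\<And>m q. d * q \<le> m \<Longrightarrow> (q + 1) ^ d \<le> f m"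
  shows "(real m / real d) ^ d \<le> real (f m)"
proof -
  define q where "q = m div d"
  have "real m < real d * real (q + 1)"
    using dividend_less_times_div[of d m] d
    unfolding q_def of_nat_mult[symmetric] of_nat_less_iff by simp
  then have "real m / real d \<le> real (q + 1)"
    using d by (simp add: divide_le_eq mult.commute)
  moreover have "real (q + 1) ^ d \<le> real (f m)"
    using bound[OF times_div_less_eq_dividend[of d m]] unfolding q_def
    by (metis of_nat_le_iff of_nat_power)
  ultimately show ?thesis
    using power_mono[of "real m / real d" "real (q + 1)" d] by simp
qed

lemma limsup_log_ge:
  fixes f :: "nat \<Rightarrow> nat"
  assumes d: "d \<ge> 1" and bound: "\<And>m q. d * q \<le> m \<Longrightarrow> (q + 1) ^ d \<le> f m"
  shows "ereal (real d) \<le> limsup (\<lambda>m. ereal (log (real m) (real (f m))))"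
proof -
  let ?g = "\<lambda>m::nat. ereal (real d - real d * (ln (real d) / ln (real m)))"
  have "eventually (\<lambda>m. ?g m \<le> ereal (log (real m) (real (f m)))) sequentially"
    using eventually_ge_at_top[of 2]
  proof eventually_elim
    case (elim m)
    then have m: "real m > 1"
      by simp
    have pos: "real m / real d > 0"
      using d m by simp
    have le: "(real m / real d) ^ d \<le> real (f m)"
      using divide_power_le_of_bound[OF d bound] .
    moreover have "0 < real (f m)"
      using le pos by (meson less_le_trans zero_less_power)
    ultimately have "log (real m) ((real m / real d) ^ d) \<le> log (real m) (real (f m))"
      using m pos by (subst log_le_cancel_iff) auto
    moreover have "log (real m) ((real m / real d) ^ d) = real d - real d * (ln (real d) / ln (real m))"
    proof -
      have "log (real m) ((real m / real d) ^ d) = real d * log (real m) (real m / real d)"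
        using pos by (intro log_nat_power) simp
      also have "log (real m) (real m / real d) = 1 - log (real m) (real d)"
        using m d by (subst log_divide_pos) auto
      finally show ?thesis
        by (simp add: log_def algebra_simps)
    qed
    ultimately show ?case by simp
  qed
  have "ereal (real d) = limsup ?g"
  proof (rule lim_imp_Limsup[OF trivial_limit_sequentially, symmetric])
    have "(\<lambda>m::nat. real d - real d * (ln (real d) / ln (real m))) \<longlonglongrightarrow> real d - real d * 0"
      by (intro tendsto_diff tendsto_mult tendsto_const
          tendsto_divide_0[OF tendsto_const ln_real_at_infinity])
    then show "?g \<longlonglongrightarrow> ereal (real d)"
      by (simp add: lim_ereal)
  qed
  also have "\<dots> \<le> limsup (\<lambda>m. ereal (log (real m) (real (f m))))"
    by (rule Limsup_mono) fact
  finally show ?thesis .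
qed

locale algebra_over =
  fixes \<iota> :: "'k::field \<Rightarrow> 'b::ring_1"
  assumes \<iota>_add: "\<iota> (c + d) = \<iota> c + \<iota> d"
    and \<iota>_mult: "\<iota> (c * d) = \<iota> c * \<iota> d"
    and \<iota>_one: "\<iota> 1 = 1"
    and \<iota>_central: "\<iota> c * b = b * \<iota> c"
begin

sublocale vs: vector_space "\<lambda>c b. \<iota> c * b"
  by unfold_locales (simp_all add: distrib_left distrib_right \<iota>_add \<iota>_mult \<iota>_one mult.assoc)

lemma span_mult:
  assumes u: "u \<in> vs.span A" and w: "w \<in> vs.span B"
  shows "u * w \<in> vs.span {p * q | p q. p \<in> A \<and> q \<in> B}"
proof -
  let ?AB = "vs.span {p * q | p q. p \<in> A \<and> q \<in> B}"
  have left: "u' * q \<in> ?AB" if u': "u' \<in> vs.span A" and q: "q \<in> B" for u' q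
  proof -
    have "vs.subspace {z. z * q \<in> ?AB}"
      by (rule vs.subspaceI) (auto simp: distrib_right mult.assoc vs.span_zero vs.span_add vs.span_scale)
    moreover have "z * q \<in> ?AB" if "z \<in> A" for z
      using that q by (auto intro: vs.span_base)
    ultimately show ?thesis
      using vs.span_induct[OF u', of "\<lambda>z. z * q \<in> ?AB"] by simp
  qed
  have "vs.subspace {w. u * w \<in> ?AB}"
  proof (rule vs.subspaceI)
    fix c w1 w2 assume "w1 \<in> {w. u * w \<in> ?AB}" "w2 \<in> {w. u * w \<in> ?AB}"
    then show "w1 + w2 \<in> {w. u * w \<in> ?AB}" "\<iota> c * w1 \<in> {w. u * w \<in> ?AB}"
      using \<iota>_central[of c u] vs.span_scale[of "u * w1" _ c]
      by (simp_all add: distrib_left vs.span_add flip: mult.assoc)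
  qed (simp add: vs.span_zero)
  then show ?thesis
    using vs.span_induct[OF w, of "\<lambda>w. u * w \<in> ?AB"] left[OF u] by simp
qed

lemma prods_span: "prods (vs.span A) i \<subseteq> vs.span (prods A i)"
proof (induction i)
  case 0
  then show ?case by (simp add: vs.span_base)
next
  case (Suc i)
  show ?case
  proof
    fix u assume "u \<in> prods (vs.span A) (Suc i)"
    then obtain v w where "u = v * w" "v \<in> vs.span A" "w \<in> prods (vs.span A) i"
      by auto
    then show "u \<in> vs.span (prods A (Suc i))"
      using Suc span_mult[of v A w "prods A i"] by auto
  qed
qed

definition growth :: "'b set \<Rightarrow> nat \<Rightarrow> nat" where
  "growth V m = vs.dim (vs.span (\<Union>i\<le>m. prods V i))"

lemma GKdim_eqI:
  assumes upper: "\<And>S. finite S \<Longrightarrow> \<exists>C\<ge>1. \<forall>m\<ge>1. real (growth (vs.span S) m) \<le> C * real m ^ d"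
    and S\<^sub>0: "finite S\<^sub>0" and d: "d \<ge> 1"
    and lower: "\<And>m q. d * q \<le> m \<Longrightarrow> (q + 1) ^ d \<le> growth (vs.span S\<^sub>0) m"
  shows "GKdim (\<lambda>c b. \<iota> c * b) = ereal (real d)"
proof -
  let ?subspaces = "{V. vs.span V = V \<and> (\<exists>S. finite S \<and> V = vs.span S)}"
  let ?rate = "\<lambda>V. limsup (\<lambda>m. ereal (log (real m) (real (growth V m))))"
  have "?rate V \<le> ereal (real d)" if V: "V \<in> ?subspaces" for V
  proof -
    obtain S where "finite S" "V = vs.span S"
      using V by blast
    then show ?thesis
      using upper by (metis limsup_log_le)
  qed
  moreover have "vs.span S\<^sub>0 \<in> ?subspaces"
    using S\<^sub>0 vs.span_span by blast
  moreover have "ereal (real d) \<le> ?rate (vs.span S\<^sub>0)"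
    using limsup_log_ge[OF d lower] .
  ultimately have "(SUP V\<in>?subspaces. ?rate V) = ereal (real d)"
    by (intro antisym SUP_least) (auto intro: SUP_upper2)
  then show ?thesis
    by (simp add: GKdim_def growth_def)
qed

end

section \<open>The generalized Weyl algebra\<close>

locale gwa =
  fixes n :: nat and s :: "'k::field mpoly \<Rightarrow> 'k mpoly" and a :: "'k mpoly"
    and phi :: "'k mpoly \<Rightarrow> 'b::ring_1" and x y :: 'b
  assumes aut: "is_aut n s" and a_Pn: "a \<in> Pn n" and GWA: "is_GWA n s a phi x y"
begin

abbreviation s_inv :: "'k mpoly \<Rightarrow> 'k mpoly" where
  "s_inv \<equiv> inv_into (Pn n) s"

lemma endo_s: "is_endo n s"
  using aut by (rule is_aut_is_endo)

lemma endo_s_inv: "is_endo n s_inv"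
  using is_aut_inv_into[OF aut] by (rule is_aut_is_endo)

lemma s_s_inv: "u \<in> Pn n \<Longrightarrow> s (s_inv u) = u"
  using aut by (simp add: is_aut_def bij_betw_def f_inv_into_f)

lemma s_inv_s: "u \<in> Pn n \<Longrightarrow> s_inv (s u) = u"
  using aut by (simp add: is_aut_def bij_betw_def inv_into_f_f)

lemma phi_add: "p \<in> Pn n \<Longrightarrow> q \<in> Pn n \<Longrightarrow> phi (p + q) = phi p + phi q"
  using GWA by (simp add: is_GWA_def)

lemma phi_mult: "p \<in> Pn n \<Longrightarrow> q \<in> Pn n \<Longrightarrow> phi (p * q) = phi p * phi q"
  using GWA by (simp add: is_GWA_def)

lemma phi_one: "phi 1 = 1"
  using GWA by (simp add: is_GWA_def)

lemma phi_zero: "phi 0 = 0"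
  using phi_add[of 0 0] by (simp add: polys_in_zero)

lemma x_phi: "p \<in> Pn n \<Longrightarrow> x * phi p = phi (s p) * x"
  using GWA by (simp add: is_GWA_def)

lemma y_phi: "p \<in> Pn n \<Longrightarrow> y * phi p = phi (s_inv p) * y"
  using GWA by (simp add: is_GWA_def)

lemma y_x: "y * x = phi a"
  using GWA by (simp add: is_GWA_def)

lemma x_y: "x * y = phi (s a)"
  using GWA by (simp add: is_GWA_def)

lemma generated: "b \<in> gen_ring (phi ` Pn n \<union> {x, y})"
  using GWA by (simp add: is_GWA_def)

lemma free_basis:
  "(\<forall>i. d i \<in> Pn n) \<Longrightarrow> (\<forall>j. e j \<in> Pn n) \<Longrightarrow>
    (\<Sum>i\<le>N. phi (d i) * x ^ i) + (\<Sum>j\<in>{1..N}. phi (e j) * y ^ j) = 0 \<Longrightarrow>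
    (\<forall>i\<le>N. d i = 0) \<and> (\<forall>j\<in>{1..N}. e j = 0)"
  using GWA unfolding is_GWA_def by blast

lemma x_powers_free:
  assumes "\<And>i. d i \<in> Pn n" and "(\<Sum>i\<le>N. phi (d i) * x ^ i) = 0" and "i \<le> N"
  shows "d i = 0"
  using free_basis[of d "\<lambda>_. 0" N] assms by (simp add: polys_in_zero phi_zero)

lemma phi_sum: "(\<And>x. x \<in> A \<Longrightarrow> f x \<in> Pn n) \<Longrightarrow> phi (sum f A) = (\<Sum>x\<in>A. phi (f x))"
  by (induction A rule: infinite_finite_induct) (simp_all add: phi_zero phi_add polys_in_sum)

lemma phi_power: "p \<in> Pn n \<Longrightarrow> phi (p ^ k) = phi p ^ k"
  by (induction k) (simp_all add: phi_one phi_mult polys_in_power)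

lemma phi_Const_central: "phi (Const c) * b = b * phi (Const c)"
  using generated
proof (induction b rule: gen_ring.induct)
  case (base u)
  then consider p where "p \<in> Pn n" "u = phi p" | "u = x" | "u = y"
    by blast
  then show ?case
  proof cases
    case 1
    then show ?thesis
      by (simp add: polys_in_Const mult.commute flip: phi_mult)
  next
    case 2
    then show ?thesis
      using x_phi[OF polys_in_Const] by (simp add: endo_Const[OF endo_s])
  next
    case 3
    then show ?thesis
      using y_phi[OF polys_in_Const] by (simp add: endo_Const[OF endo_s_inv])
  qed
next
  case (mult u v)
  have "phi (Const c) * (u * v) = u * (phi (Const c) * v)"
    by (simp add: mult.IH(1) flip: mult.assoc)
  then show ?case
    by (simp add: mult.IH(2) mult.assoc)
qed (simp_all add: algebra_simps)

sublocale algebra_over "\<lambda>c. phi (Const c)"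
proof
  fix c d :: 'k and b :: 'b
  show "phi (Const (c + d)) = phi (Const c) + phi (Const d)"
    by (simp add: Const_add phi_add polys_in_Const)
  show "phi (Const (c * d)) = phi (Const c) * phi (Const d)"
    by (simp add: Const_mult phi_mult polys_in_Const)
  show "phi (Const 1) = 1"
    by (simp add: phi_one)
  show "phi (Const c) * b = b * phi (Const c)"
    by (rule phi_Const_central)
qed

lemma phi_mult_in_span:
  assumes p: "p \<in> Pn n"
  shows "phi p * z \<in> vs.span ((\<lambda>\<alpha>. phi (monomial \<alpha>) * z) ` Poly_Mapping.keys p)"
proof -
  have monomial_Pn: "monomial \<alpha> \<in> Pn n" if "\<alpha> \<in> Poly_Mapping.keys p" for \<alpha>
    using keys_subset_if_polys_in[OF p that] by (rule polys_in_monomial)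
  have "phi p * z = (\<Sum>\<alpha>\<in>Poly_Mapping.keys p. phi (Const (Poly_Mapping.lookup p \<alpha>)) * (phi (monomial \<alpha>) * z))"
    by (subst mpoly_eq_sum_monomials)
      (simp add: phi_sum phi_mult monomial_Pn polys_in_Const polys_in_Const_mult sum_distrib_right
        mult.assoc)
  also have "\<dots> \<in> vs.span ((\<lambda>\<alpha>. phi (monomial \<alpha>) * z) ` Poly_Mapping.keys p)"
    by (intro vs.span_sum vs.span_scale vs.span_base) simp
  finally show ?thesis .
qed

definition gens :: "'b set" where
  "gens = insert 1 (insert x (insert y (phi ` Var ` {..<n})))"

lemma finite_gens: "finite gens"
  by (simp add: gens_def)

lemma one_in_gens: "1 \<in> gens"
  by (simp add: gens_def)

lemma phi_prod_Var_powers_in_prods: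
  "finite A \<Longrightarrow> A \<subseteq> {..<n} \<Longrightarrow> phi (\<Prod>i\<in>A. Var i ^ k i) \<in> prods gens (\<Sum>i\<in>A. k i)"
proof (induction A rule: finite_induct)
  case empty
  then show ?case by (simp add: phi_one)
next
  case (insert j A)
  have Var_Pn: "Var j \<in> Pn n"
    using insert by (simp add: polys_in_Var)
  have prod_Pn: "(\<Prod>i\<in>A. Var i ^ k i) \<in> Pn n"
    using insert by (intro polys_in_prod polys_in_power polys_in_Var) auto
  have "phi (\<Prod>i\<in>insert j A. Var i ^ k i) = phi (Var j ^ k j * (\<Prod>i\<in>A. Var i ^ k i))"
    using insert by simp
  also have "\<dots> = phi (Var j) ^ k j * phi (\<Prod>i\<in>A. Var i ^ k i)"
    by (simp add: phi_mult[OF polys_in_power[OF Var_Pn] prod_Pn] phi_power[OF Var_Pn])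
  finally have "phi (\<Prod>i\<in>insert j A. Var i ^ k i) = phi (Var j) ^ k j * phi (\<Prod>i\<in>A. Var i ^ k i)" .
  moreover have "phi (Var j) ^ k j \<in> prods gens (k j)"
    using insert by (intro power_in_prods) (auto simp: gens_def)
  ultimately show ?case
    using insert prods_mult by fastforce
qed

lemma phi_monomial_in_prods:
  "Poly_Mapping.keys \<alpha> \<subseteq> {..<n} \<Longrightarrow>
     phi (monomial \<alpha>) \<in> prods gens (\<Sum>i\<in>Poly_Mapping.keys \<alpha>. Poly_Mapping.lookup \<alpha> i)"
  unfolding monomial_eq_prod_Var by (simp add: phi_prod_Var_powers_in_prods)

subsection \<open>Lower bound\<close>

definition x_monomial :: "(nat \<Rightarrow>\<^sub>0 nat) \<times> nat \<Rightarrow> 'b" where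
  "x_monomial = (\<lambda>(\<alpha>, j). phi (monomial \<alpha>) * x ^ j)"

lemma x_monomials_free:
  assumes A: "finite A" "\<And>\<alpha>. \<alpha> \<in> A \<Longrightarrow> Poly_Mapping.keys \<alpha> \<subseteq> {..<n}"
    and zero: "(\<Sum>p\<in>A \<times> {..N}. phi (Const (c p)) * x_monomial p) = 0"
    and p: "p \<in> A \<times> {..N}"
  shows "c p = 0"
proof -
  define d where "d j = (\<Sum>\<alpha>\<in>A. Const (c (\<alpha>, j)) * monomial \<alpha>)" for j
  have d_Pn: "d j \<in> Pn n" for j
    unfolding d_def using A by (intro polys_in_sum polys_in_Const_mult polys_in_monomial) auto
  have inner: "(\<Sum>\<alpha>\<in>A. phi (Const (c (\<alpha>, j))) * x_monomial (\<alpha>, j)) = phi (d j) * x ^ j" for j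
    unfolding d_def x_monomial_def using A
    by (simp add: phi_sum phi_mult polys_in_Const polys_in_Const_mult polys_in_monomial
        sum_distrib_right mult.assoc)
  have "(\<Sum>p\<in>A \<times> {..N}. phi (Const (c p)) * x_monomial p)
      = (\<Sum>\<alpha>\<in>A. \<Sum>j\<le>N. phi (Const (c (\<alpha>, j))) * x_monomial (\<alpha>, j))"
    by (simp add: sum.cartesian_product)
  also have "\<dots> = (\<Sum>j\<le>N. phi (d j) * x ^ j)"
    by (subst sum.swap) (simp add: inner)
  finally have "(\<Sum>j\<le>N. phi (d j) * x ^ j) = 0"
    using zero by simp
  then have "d (snd p) = 0"
    using x_powers_free[OF d_Pn] p by auto
  moreover have "Poly_Mapping.lookup (d (snd p)) (fst p) = c p"
    using A p by (auto simp: d_def lookup_sum_Const_mult_monomial)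
  ultimately show ?thesis by simp
qed

lemma inj_on_x_monomial:
  assumes A: "finite A" "\<And>\<alpha>. \<alpha> \<in> A \<Longrightarrow> Poly_Mapping.keys \<alpha> \<subseteq> {..<n}"
  shows "inj_on x_monomial (A \<times> {..N})"
proof (rule inj_onI, rule ccontr)
  fix p q assume p: "p \<in> A \<times> {..N}" and q: "q \<in> A \<times> {..N}"
    and eq: "x_monomial p = x_monomial q" and "p \<noteq> q"
  define c where "c r = (if r = p then 1 else if r = q then -1 else 0 :: 'k)" for r
  have "(\<Sum>r\<in>A \<times> {..N}. phi (Const (c r)) * x_monomial r) = (\<Sum>r\<in>{p, q}. phi (Const (c r)) * x_monomial r)"
    using A p q by (intro sum.mono_neutral_right) (auto simp: c_def phi_zero)
  also have "\<dots> = 0"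
    using \<open>p \<noteq> q\<close> eq vs.scale_minus_left[of 1 "x_monomial q"] by (simp add: c_def phi_one)
  finally have "c p = 0"
    using x_monomials_free[OF A] p by blast
  then show False
    by (simp add: c_def)
qed

lemma independent_x_monomials:
  assumes A: "finite A" "\<And>\<alpha>. \<alpha> \<in> A \<Longrightarrow> Poly_Mapping.keys \<alpha> \<subseteq> {..<n}"
  shows "vs.independent (x_monomial ` (A \<times> {..N}))"
  unfolding vs.independent_explicit_module
proof (intro allI impI)
  fix T u v
  assume T: "finite T" "T \<subseteq> x_monomial ` (A \<times> {..N})"
    and zero: "(\<Sum>v\<in>T. phi (Const (u v)) * v) = 0" and v: "v \<in> T"
  let ?P = "A \<times> {..N}"
  define c where "c p = (if x_monomial p \<in> T then u (x_monomial p) else 0)" for p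
  have "(\<Sum>p\<in>?P. phi (Const (c p)) * x_monomial p)
      = (\<Sum>w\<in>x_monomial ` ?P. phi (Const (if w \<in> T then u w else 0)) * w)"
    by (simp add: sum.reindex[OF inj_on_x_monomial[OF A]] c_def)
  also have "\<dots> = (\<Sum>w\<in>x_monomial ` ?P. if w \<in> T then phi (Const (u w)) * w else 0)"
    by (intro sum.cong) (simp_all add: phi_zero)
  also have "\<dots> = (\<Sum>w\<in>T. phi (Const (u w)) * w)"
    using A T by (simp add: sum.inter_restrict[symmetric] Int_absorb1)
  finally have c_zero: "\<forall>p\<in>?P. c p = 0"
    using x_monomials_free[OF A] zero by auto
  obtain p where p: "p \<in> ?P" "v = x_monomial p"
    using v T by blast
  then have "c p = 0"
    using c_zero by blast
  then show "u v = 0"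
    using p(2) v by (simp add: c_def)
qed

lemma x_monomial_in_prods:
  assumes "\<alpha> \<in> box_monomials n q" "j \<le> q" "(n + 1) * q \<le> m"
  shows "x_monomial (\<alpha>, j) \<in> prods gens m"
proof -
  let ?d = "\<Sum>i\<in>Poly_Mapping.keys \<alpha>. Poly_Mapping.lookup \<alpha> i"
  have keys: "Poly_Mapping.keys \<alpha> \<subseteq> {..<n}"
    using assms(1) by (simp add: box_monomials_def)
  have "?d \<le> card (Poly_Mapping.keys \<alpha>) * q"
    using assms(1) sum_bounded_above[of "Poly_Mapping.keys \<alpha>" "Poly_Mapping.lookup \<alpha>" q]
    by (simp add: box_monomials_def)
  also have "\<dots> \<le> n * q"
    using card_mono[OF _ keys] by simp
  finally have "?d + j \<le> m"
    using assms(2,3) by simp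
  moreover have "x_monomial (\<alpha>, j) \<in> prods gens (?d + j)"
    unfolding x_monomial_def
    using phi_monomial_in_prods[OF keys] power_in_prods[of x gens j]
    by (simp add: prods_mult gens_def)
  ultimately show ?thesis
    using prods_mono_right[OF one_in_gens] by blast
qed

lemma growth_lower_bound:
  assumes "(n + 1) * q \<le> m"
  shows "(q + 1) ^ (n + 1) \<le> growth (vs.span gens) m"
proof -
  let ?P = "box_monomials n q \<times> {..q}"
  let ?W = "\<Union>i\<le>m. prods (vs.span gens) i"
  have box: "finite (box_monomials n q)" "\<And>\<alpha>. \<alpha> \<in> box_monomials n q \<Longrightarrow> Poly_Mapping.keys \<alpha> \<subseteq> {..<n}"
    by (rule finite_box_monomials) (simp add: box_monomials_def)
  have "x_monomial ` ?P \<subseteq> prods (vs.span gens) m"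
    using x_monomial_in_prods[OF _ _ assms] prods_mono_left[OF vs.span_superset] by fast
  also have "prods (vs.span gens) m \<subseteq> vs.span ?W"
    using vs.span_superset[of ?W] by auto
  finally have "x_monomial ` ?P \<subseteq> vs.span ?W" .
  moreover have "?W \<subseteq> vs.span (\<Union>i\<le>m. prods gens i)"
    using prods_span[of gens] vs.span_mono[of "prods gens _" "\<Union>i\<le>m. prods gens i"] by blast
  ultimately have "card (x_monomial ` ?P) \<le> vs.dim ?W"
    using finite_gens
    by (intro vs.card_le_dim_if_independent[OF _ _ _ independent_x_monomials[OF box]])
      (auto intro: finite_prods)
  moreover have "card (x_monomial ` ?P) = (q + 1) ^ n * (q + 1)"
    using card_image[OF inj_on_x_monomial[OF box]]
    by (simp add: card_cartesian_product card_box_monomials)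
  ultimately show ?thesis
    by (simp add: growth_def mult.commute)
qed

subsection \<open>Upper bound\<close>

definition monomial_words :: "nat \<Rightarrow> nat \<Rightarrow> 'b set" where
  "monomial_words D M = (\<lambda>(\<alpha>, i, z). phi (monomial \<alpha>) * z ^ i) ` (box_monomials n D \<times> {..M} \<times> {x, y})"

lemma finite_monomial_words: "finite (monomial_words D M)"
  by (simp add: monomial_words_def finite_box_monomials)

lemma card_monomial_words_le: "card (monomial_words D M) \<le> 2 * (D + 1) ^ n * (M + 1)"
proof -
  have "card (monomial_words D M) \<le> card (box_monomials n D \<times> {..M} \<times> {x, y})"
    unfolding monomial_words_def by (rule card_image_le) (simp add: finite_box_monomials)
  also have "\<dots> = (D + 1) ^ n * (M + 1) * card {x, y}"
    by (simp add: card_cartesian_product card_box_monomials algebra_simps)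
  also have "\<dots> \<le> 2 * (D + 1) ^ n * (M + 1)"
    by (cases "x = y") simp_all
  finally show ?thesis .
qed

lemma span_prods_gens_mono: "r \<le> r' \<Longrightarrow> vs.span (prods gens r) \<subseteq> vs.span (prods gens r')"
  by (intro vs.span_mono prods_mono_right one_in_gens)

lemma mult_span_prods_gens:
  assumes "u \<in> vs.span (prods gens r)" "w \<in> vs.span (prods gens r')"
  shows "u * w \<in> vs.span (prods gens (r + r'))"
proof -
  have "{p * q |p q. p \<in> prods gens r \<and> q \<in> prods gens r'} \<subseteq> prods gens (r + r')"
    using prods_mult by blast
  then show ?thesis
    using span_mult[OF assms] vs.span_mono by blast
qed

lemma phi_in_span_prods_gens:
  assumes p: "p \<in> Pn n"
  shows "\<exists>r. phi p \<in> vs.span (prods gens r)"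
proof -
  define r where "r = (\<Sum>\<alpha>\<in>Poly_Mapping.keys p. \<Sum>i\<in>Poly_Mapping.keys \<alpha>. Poly_Mapping.lookup \<alpha> i)"
  have "phi (monomial \<alpha>) * 1 \<in> prods gens r" if \<alpha>: "\<alpha> \<in> Poly_Mapping.keys p" for \<alpha>
  proof -
    have "(\<Sum>i\<in>Poly_Mapping.keys \<alpha>. Poly_Mapping.lookup \<alpha> i) \<le> r"
      unfolding r_def using \<alpha> by (intro member_le_sum) auto
    then show ?thesis
      using phi_monomial_in_prods[OF keys_subset_if_polys_in[OF p \<alpha>]] prods_mono_right[OF one_in_gens]
      by auto
  qed
  then have "(\<lambda>\<alpha>. phi (monomial \<alpha>) * 1) ` Poly_Mapping.keys p \<subseteq> prods gens r"
    by blast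
  then have "phi p * 1 \<in> vs.span (prods gens r)"
    by (rule subsetD[OF vs.span_mono phi_mult_in_span[OF p]])
  then show ?thesis
    by auto
qed

lemma in_span_prods_gens: "\<exists>r. b \<in> vs.span (prods gens r)"
  using generated
proof (induction b rule: gen_ring.induct)
  case (base u)
  show ?case
  proof (cases "u \<in> phi ` Pn n")
    case True
    then show ?thesis
      using phi_in_span_prods_gens by blast
  next
    case False
    then have "u \<in> prods gens 1"
      using base power_in_prods[of u gens 1] by (auto simp: gens_def)
    then have "u \<in> vs.span (prods gens 1)"
      by (rule vs.span_base)
    then show ?thesis ..
  qed
next
  case one
  have "1 \<in> vs.span (prods gens 0)"
    by (simp add: vs.span_base)
  then show ?case ..
next
  case (uminus u)
  obtain r where "u \<in> vs.span (prods gens r)"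
    using uminus.IH ..
  then have "- u \<in> vs.span (prods gens r)"
    by (rule vs.span_neg)
  then show ?case ..
next
  case (add u v)
  obtain r r' where "u \<in> vs.span (prods gens r)" "v \<in> vs.span (prods gens r')"
    using add.IH by blast
  then have "u \<in> vs.span (prods gens (r + r'))" "v \<in> vs.span (prods gens (r + r'))"
    using span_prods_gens_mono[of r "r + r'"] span_prods_gens_mono[of r' "r + r'"] by auto
  then have "u + v \<in> vs.span (prods gens (r + r'))"
    by (rule vs.span_add)
  then show ?case ..
next
  case (mult u v)
  obtain r r' where "u \<in> vs.span (prods gens r)" "v \<in> vs.span (prods gens r')"
    using mult.IH by blast
  then have "u * v \<in> vs.span (prods gens (r + r'))"
    by (rule mult_span_prods_gens)
  then show ?case ..
qed

lemma finite_subset_span_prods_gens: "finite S \<Longrightarrow> \<exists>r. S \<subseteq> vs.span (prods gens r)"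
proof (induction S rule: finite_induct)
  case empty
  then show ?case by simp
next
  case (insert b S)
  obtain r r' where "S \<subseteq> vs.span (prods gens r)" "b \<in> vs.span (prods gens r')"
    using insert.IH in_span_prods_gens by blast
  then have "insert b S \<subseteq> vs.span (prods gens (r + r'))"
    using span_prods_gens_mono[of r "r + r'"] span_prods_gens_mono[of r' "r + r'"] by auto
  then show ?case ..
qed

end

lemma two_sided_orbit_closed:
  assumes "\<And>u. u \<in> Pn n \<Longrightarrow> f (g u) = u" "is_endo n g" "q \<in> Pn n"
    and p: "p \<in> range (\<lambda>r. (f ^^ r) q) \<union> range (\<lambda>r. (g ^^ r) q)"
  shows "f p \<in> range (\<lambda>r. (f ^^ r) q) \<union> range (\<lambda>r. (g ^^ r) q)"
proof -
  obtain r where "p = (f ^^ r) q \<or> p = (g ^^ r) q"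
    using p by blast
  then consider "f p = (f ^^ Suc r) q" | "r = 0" "f p = (f ^^ 1) q" | r' where "f p = (g ^^ r') q"
    using assms(1) funpow_Pn[OF assms(2,3)] by (cases r) auto
  then show ?thesis
    by cases blast+
qed

text \<open>If \<open>\<sigma>\<close> and \<open>\<sigma>^-1\<close> have bounded orbits, moving \<open>x\<close> and \<open>y\<close> to the right turns a product
  of \<open>M\<close> generators into one of the \<open>normal_words M\<close>, whose coefficient is a product of at most
  \<open>M\<close> \<open>translates\<close>. These have uniformly bounded exponents, so the exponents of the
  coefficient grow only linearly in \<open>M\<close>.\<close>

locale gwa_bounded = gwa n s a phi x y
  for n and s :: "'k::field mpoly \<Rightarrow> 'k mpoly" and a and phi :: "'k mpoly \<Rightarrow> 'b::ring_1" and x y +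
  assumes bounded_s: "bounded_orbits n s" and bounded_s_inv: "bounded_orbits n (inv_into (Pn n) s)"
begin

definition translates :: "'k mpoly set" where
  "translates = (\<Union>q\<in>insert a (Var ` {..<n}). range (\<lambda>r. (s ^^ r) q) \<union> range (\<lambda>r. (s_inv ^^ r) q))"

lemma generators_Pn: "insert a (Var ` {..<n}) \<subseteq> Pn n"
  using a_Pn by (auto intro: polys_in_Var)

lemma translates_Pn: "translates \<subseteq> Pn n"
  using generators_Pn funpow_Pn[OF endo_s] funpow_Pn[OF endo_s_inv]
  unfolding translates_def by blast

lemma s_translates:
  assumes "p \<in> translates"
  shows "s p \<in> translates"
proof -
  obtain q where q: "q \<in> insert a (Var ` {..<n})"
    and p: "p \<in> range (\<lambda>r. (s ^^ r) q) \<union> range (\<lambda>r. (s_inv ^^ r) q)"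
    using assms unfolding translates_def by (rule UN_E)
  have "s p \<in> range (\<lambda>r. (s ^^ r) q) \<union> range (\<lambda>r. (s_inv ^^ r) q)"
    using two_sided_orbit_closed[OF s_s_inv endo_s_inv subsetD[OF generators_Pn q] p] .
  with q show ?thesis
    unfolding translates_def by (rule UN_I)
qed

lemma s_inv_translates:
  assumes "p \<in> translates"
  shows "s_inv p \<in> translates"
proof -
  obtain q where q: "q \<in> insert a (Var ` {..<n})"
    and p: "p \<in> range (\<lambda>r. (s_inv ^^ r) q) \<union> range (\<lambda>r. (s ^^ r) q)"
    using assms unfolding translates_def Un_commute[of "range (\<lambda>r. (s ^^ r) _)"] by (rule UN_E)
  have "s_inv p \<in> range (\<lambda>r. (s_inv ^^ r) q) \<union> range (\<lambda>r. (s ^^ r) q)"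
    using two_sided_orbit_closed[OF s_inv_s endo_s subsetD[OF generators_Pn q] p] .
  with q show ?thesis
    unfolding translates_def Un_commute[of "range (\<lambda>r. (s ^^ r) _)"] by (rule UN_I)
qed

lemma generators_translates: "insert a (Var ` {..<n}) \<subseteq> translates"
proof
  fix q assume q: "q \<in> insert a (Var ` {..<n})"
  have "q \<in> range (\<lambda>r. (s ^^ r) q) \<union> range (\<lambda>r. (s_inv ^^ r) q)"
    using rangeI[of "\<lambda>r. (s ^^ r) q" 0] by simp
  with q show "q \<in> translates"
    unfolding translates_def by (rule UN_I)
qed

lemma in_box_translates: "\<exists>K. \<forall>p\<in>translates. in_box K p"
proof -
  let ?Q = "insert a (Var ` {..<n})"
  have "\<exists>D. \<forall>r. in_box D ((s ^^ r) q)" "\<exists>D. \<forall>r. in_box D ((s_inv ^^ r) q)" if "q \<in> ?Q" for q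
    using bounded_s bounded_s_inv subsetD[OF generators_Pn that] by (simp_all add: bounded_orbits_def)
  then obtain K K' where "\<forall>q\<in>?Q. \<forall>r. in_box K ((s ^^ r) q)" "\<forall>q\<in>?Q. \<forall>r. in_box K' ((s_inv ^^ r) q)"
    using in_box_uniform[of ?Q "\<lambda>q r. (s ^^ r) q"] in_box_uniform[of ?Q "\<lambda>q r. (s_inv ^^ r) q"]
    by (meson finite.insertI finite_imageI finite_lessThan)
  moreover have "in_box K p \<Longrightarrow> in_box (K + K') p" "in_box K' p \<Longrightarrow> in_box (K + K') p" for p
    by (simp_all add: in_box_mono)
  ultimately have "\<forall>p\<in>translates. in_box (K + K') p"
    unfolding translates_def by auto
  then show ?thesis ..
qed

definition normal_words :: "nat \<Rightarrow> 'b set" where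
  "normal_words M = {phi (prod_list ps) * z ^ i | ps z i.
     set ps \<subseteq> translates \<and> length ps \<le> M \<and> z \<in> {x, y} \<and> i \<le> M}"

lemma normal_wordsI:
  "set ps \<subseteq> translates \<Longrightarrow> length ps \<le> M \<Longrightarrow> z \<in> {x, y} \<Longrightarrow> i \<le> M \<Longrightarrow>
    phi (prod_list ps) * z ^ i \<in> normal_words M"
  unfolding normal_words_def by blast

lemma prod_list_translates_Pn: "set ps \<subseteq> translates \<Longrightarrow> prod_list ps \<in> Pn n"
  using translates_Pn by (intro polys_in_prod_list) auto

lemma x_mult_normal_word:
  assumes ps: "set ps \<subseteq> translates" "length ps \<le> M" and z: "z \<in> {x, y}" and i: "i \<le> M"
  shows "x * (phi (prod_list ps) * z ^ i) \<in> normal_words (Suc M)"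
proof -
  let ?P = "prod_list (map s ps)"
  have map_ps: "set (map s ps) \<subseteq> translates" "length (map s ps) \<le> Suc M"
    using ps s_translates by auto
  have x_P: "x * phi (prod_list ps) = phi ?P * x"
    using ps translates_Pn
    by (simp add: x_phi prod_list_translates_Pn endo_prod_list[OF endo_s] subset_trans)
  consider "z = x" | "z = y" "i = 0" | j where "z = y" "i = Suc j"
    using z by (cases i) auto
  then show ?thesis
  proof cases
    case 1
    then have "x * (phi (prod_list ps) * z ^ i) = phi ?P * x ^ Suc i"
      by (simp add: x_P flip: mult.assoc)
    then show ?thesis
      using normal_wordsI[OF map_ps, of x "Suc i"] i by simp
  next
    case 2
    then have "x * (phi (prod_list ps) * z ^ i) = phi ?P * x ^ 1"
      by (simp add: x_P)
    then show ?thesis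
      using normal_wordsI[OF map_ps, of x 1] by simp
  next
    case 3
    have "x * (phi (prod_list ps) * z ^ i) = phi ?P * (x * y) * y ^ j"
      using 3 by (simp add: x_P flip: mult.assoc)
    also have "\<dots> = phi (prod_list (map s ps @ [s a])) * y ^ j"
      using map_ps prod_list_translates_Pn endo_Pn[OF endo_s a_Pn]
      by (simp add: x_y phi_mult)
    finally show ?thesis
      using normal_wordsI[of "map s ps @ [s a]" "Suc M" y j] ps s_translates generators_translates 3 i
      by auto
  qed
qed

lemma y_mult_normal_word:
  assumes ps: "set ps \<subseteq> translates" "length ps \<le> M" and z: "z \<in> {x, y}" and i: "i \<le> M"
  shows "y * (phi (prod_list ps) * z ^ i) \<in> normal_words (Suc M)"
proof -
  let ?P = "prod_list (map s_inv ps)"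
  have map_ps: "set (map s_inv ps) \<subseteq> translates" "length (map s_inv ps) \<le> Suc M"
    using ps s_inv_translates by auto
  have y_P: "y * phi (prod_list ps) = phi ?P * y"
    using ps translates_Pn
    by (simp add: y_phi prod_list_translates_Pn endo_prod_list[OF endo_s_inv] subset_trans)
  consider "z = y" | "z = x" "i = 0" | j where "z = x" "i = Suc j"
    using z by (cases i) auto
  then show ?thesis
  proof cases
    case 1
    then have "y * (phi (prod_list ps) * z ^ i) = phi ?P * y ^ Suc i"
      by (simp add: y_P flip: mult.assoc)
    then show ?thesis
      using normal_wordsI[OF map_ps, of y "Suc i"] i by simp
  next
    case 2
    then have "y * (phi (prod_list ps) * z ^ i) = phi ?P * y ^ 1"
      by (simp add: y_P)
    then show ?thesis
      using normal_wordsI[OF map_ps, of y 1] by simp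
  next
    case 3
    have "y * (phi (prod_list ps) * z ^ i) = phi ?P * (y * x) * x ^ j"
      using 3 by (simp add: y_P flip: mult.assoc)
    also have "\<dots> = phi (prod_list (map s_inv ps @ [a])) * x ^ j"
      using map_ps prod_list_translates_Pn a_Pn by (simp add: y_x phi_mult)
    finally show ?thesis
      using normal_wordsI[of "map s_inv ps @ [a]" "Suc M" x j] ps s_inv_translates generators_translates 3 i
      by auto
  qed
qed

lemma prods_gens_subset_normal_words: "prods gens M \<subseteq> normal_words M"
proof (induction M)
  case 0
  have "phi (prod_list []) * x ^ 0 \<in> normal_words 0"
    by (rule normal_wordsI) auto
  then show ?case
    by (simp add: phi_one)
next
  case (Suc M)
  show ?case
  proof
    fix u assume "u \<in> prods gens (Suc M)"
    then obtain g w where u: "u = g * w" and g: "g \<in> gens" and "w \<in> prods gens M"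
      by auto
    then obtain ps z i where w: "w = phi (prod_list ps) * z ^ i"
      and ps: "set ps \<subseteq> translates" "length ps \<le> M" and z: "z \<in> {x, y}" and i: "i \<le> M"
      using Suc.IH unfolding normal_words_def by blast
    from g consider "g = 1" | "g = x" | "g = y" | r where "r < n" "g = phi (Var r)"
      by (auto simp: gens_def)
    then show "u \<in> normal_words (Suc M)"
    proof cases
      case 1
      have "w \<in> normal_words (Suc M)"
        unfolding w using ps z i by (intro normal_wordsI) auto
      then show ?thesis
        using u 1 by simp
    next
      case 2
      then show ?thesis
        using x_mult_normal_word[OF ps z i] u w by simp
    next
      case 3
      then show ?thesis
        using y_mult_normal_word[OF ps z i] u w by simp
    next
      case 4
      then have "u = phi (prod_list (Var r # ps)) * z ^ i"
        using u w ps prod_list_translates_Pn by (simp add: phi_mult polys_in_Var mult.assoc)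
      moreover have "phi (prod_list (Var r # ps)) * z ^ i \<in> normal_words (Suc M)"
        using 4 ps z i generators_translates by (intro normal_wordsI) auto
      ultimately show ?thesis
        by simp
    qed
  qed
qed

lemma normal_words_subset_span:
  assumes K: "\<forall>p\<in>translates. in_box K p"
  shows "normal_words M \<subseteq> vs.span (monomial_words (K * M) M)"
proof
  fix w assume "w \<in> normal_words M"
  then obtain ps z i where w: "w = phi (prod_list ps) * z ^ i"
    and ps: "set ps \<subseteq> translates" "length ps \<le> M" and z: "z \<in> {x, y}" and i: "i \<le> M"
    unfolding normal_words_def by blast
  have "in_box (K * length ps) (prod_list ps)"
    using ps(1) K by (intro in_box_prod_list) auto
  then have "in_box (K * M) (prod_list ps)"
    by (rule in_box_mono) (use ps(2) in simp)
  then have "Poly_Mapping.keys (prod_list ps) \<subseteq> box_monomials n (K * M)"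
    using prod_list_translates_Pn[OF ps(1)] by (intro keys_subset_box_monomials)
  then have "(\<lambda>\<alpha>. phi (monomial \<alpha>) * z ^ i) ` Poly_Mapping.keys (prod_list ps) \<subseteq> monomial_words (K * M) M"
    using z i unfolding monomial_words_def by force
  then show "w \<in> vs.span (monomial_words (K * M) M)"
    using phi_mult_in_span[OF prod_list_translates_Pn[OF ps(1)]] vs.span_mono w by blast
qed

lemma span_powers_subset_span_monomial_words:
  assumes K: "\<forall>p\<in>translates. in_box K p" and r: "S \<subseteq> vs.span (prods gens r)"
  shows "vs.span (\<Union>i\<le>m. prods (vs.span S) i) \<subseteq> vs.span (monomial_words (K * (r * m)) (r * m))"
proof (intro vs.span_minimal vs.subspace_span UN_least)
  fix i assume "i \<in> {..m}"
  have "prods (vs.span S) i \<subseteq> prods (vs.span (prods gens r)) i"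
    using r by (intro prods_mono_left vs.span_minimal) auto
  also have "\<dots> \<subseteq> vs.span (prods gens (r * i))"
    using prods_span vs.span_mono[OF prods_prods] by blast
  also have "\<dots> \<subseteq> vs.span (prods gens (r * m))"
    using \<open>i \<in> {..m}\<close> by (intro span_prods_gens_mono) simp
  also have "\<dots> \<subseteq> vs.span (monomial_words (K * (r * m)) (r * m))"
    using prods_gens_subset_normal_words normal_words_subset_span[OF K]
    by (intro vs.span_minimal) auto
  finally show "prods (vs.span S) i \<subseteq> vs.span (monomial_words (K * (r * m)) (r * m))" .
qed

lemma growth_upper_bound:
  assumes S: "finite S"
  shows "\<exists>C\<ge>1. \<forall>m\<ge>1. real (growth (vs.span S) m) \<le> C * real m ^ (n + 1)"
proof -
  obtain K where K: "\<forall>p\<in>translates. in_box K p"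
    using in_box_translates by blast
  obtain r where r: "S \<subseteq> vs.span (prods gens r)"
    using finite_subset_span_prods_gens[OF S] by blast
  define C where "C = 2 * (K * r + 1) ^ n * (r + 1)"
  have "growth (vs.span S) m \<le> C * m ^ (n + 1)" if m: "m \<ge> 1" for m
  proof -
    have "growth (vs.span S) m \<le> card (monomial_words (K * (r * m)) (r * m))"
      unfolding growth_def
      by (rule vs.dim_le_card[OF span_powers_subset_span_monomial_words[OF K r] finite_monomial_words])
    also have "\<dots> \<le> 2 * (K * (r * m) + 1) ^ n * (r * m + 1)"
      by (rule card_monomial_words_le)
    also have "\<dots> \<le> 2 * ((K * r + 1) * m) ^ n * ((r + 1) * m)"
      using m by (intro mult_le_mono power_mono) (auto simp: algebra_simps)
    also have "\<dots> = C * m ^ (n + 1)"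
      unfolding C_def power_mult_distrib power_add power_one_right by (simp only: ac_simps)
    finally show ?thesis .
  qed
  then have "\<forall>m\<ge>1. real (growth (vs.span S) m) \<le> real C * real m ^ (n + 1)"
    by (metis of_nat_le_iff of_nat_mult of_nat_power)
  moreover have "C > 0"
    by (simp add: C_def)
  then have "real C \<ge> 1"
    by simp
  ultimately show ?thesis
    by blast
qed

end

theorem corollary3p8:
  fixes n :: nat and s :: "'k::field mpoly \<Rightarrow> 'k mpoly" and a :: "'k mpoly"
    and phi :: "'k mpoly \<Rightarrow> 'b::ring_1" and x y :: 'b
  assumes "is_aut n s" and "a \<in> Pn n"
    and "is_GWA n s a phi x y"
    and "m \<ge> 1" and "\<exists>t. triangular n t \<and> conjugate n (s ^^ m) t"
  shows "GKdim (\<lambda>c b. phi (Const c) * b) = ereal (real n + 1)"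
proof -
  obtain t where "triangular n t" "conjugate n (s ^^ m) t"
    using assms(5) by blast
  then interpret gwa_bounded n s a phi x y
    using assms(1-4) bounded_orbits_if_power_conj_triangular by unfold_locales blast+
  have "GKdim (\<lambda>c b. phi (Const c) * b) = ereal (real (n + 1))"
    by (rule GKdim_eqI[OF growth_upper_bound finite_gens _ growth_lower_bound]) simp_all
  then show ?thesis
    by simp
qed

end
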